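(* Let $\mathfrak g=\mathfrak{sl}_4(\mathbb C)$ with simple roots $\alpha_1,\alpha_2,\alpha_3$. Let $e=X_{\alpha_1}+X_{\alpha_2+\alpha_3}$ (orbit with partition $(3,1)$). Let $\mathfrak n_1$ be the span of $$H_{\alpha_1},\ H_{\alpha_2},\ X_{\alpha_1},\ X_{\alpha_2},\ X_{-\alpha_2},\ X_{-\alpha_1}+X_{\alpha_3},\ X_{-\alpha_3},\ X_{-\alpha_1-\alpha_2},\ X_{-\alpha_2-\alpha_3},\ X_{-\alpha_1-\alpha_2-\alpha_3}.$$ Then $\mathfrak n_1$ is a complement of $\mathfrak g^e$ in $\mathfrak g$ that is not $\operatorname{ad}h^+$-invariant, where $h^+=2H_{\alpha_1}+2H_{\alpha_2}+2H_{\alpha_3}$. Moreover, the transverse Poisson structure $\Lambda_{N_1}(q)$ on $N_1=e+\mathfrak n_1^\perp$ is not polynomial: some of its entries are rational functions of $q$ that are not polynomials.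
   Context: $(H_\alpha,X_\alpha,X_{-\alpha})$ denote Chevalley basis elements and $K$ is the Killing form. Transverse Poisson structure. Choose a basis $Z_1,\dots,Z_k$ of $\mathfrak g^e$ and a basis $X_1,\dots,X_p$ of the complement $\mathfrak n$. Let $(\overline{Z_i},\overline{X_j})$ be the $K$-dual basis, and identify $\mathfrak n^\perp$ with $\mathbb C^k$ via $q\mapsto\sum_s q_s\overline{Z_s}$. Define: - $C_N(q)_{l,m}=K(e+\sum_s q_s\overline{Z_s},[X_l,X_m])$; - $D_N(q)_{l,j}=K(\sum_s q_s\overline{Z_s},[X_l,Z_j])$; - $A_N(q)_{i,j}=K(\sum_s q_s\overline{Z_s},[Z_i,Z_j])$. Then $\Lambda_N(q)=A_N+{}^tD_N\,C_N^{-1}D_N$, defined where $C_N(q)$ is invertible; its entries are rational in $q$. *)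

theory Defs
  imports "HOL-Analysis.Analysis" "HOL-Library.Numeral_Type"
begin

type_synonym mat4 = "complex^4^4"

definition sl4 :: "mat4 set" where
  "sl4 = {A. trace A = 0}"

definition smul :: "complex \<Rightarrow> mat4 \<Rightarrow> mat4" where
  "smul c A = (\<chi> i j. c * A $ i $ j)"

definition brk :: "mat4 \<Rightarrow> mat4 \<Rightarrow> mat4" where
  "brk A B = A ** B - B ** A"

text \<open>Killing form of sl_n is 2n tr(xy); here n = 4.\<close>
definition killing :: "mat4 \<Rightarrow> mat4 \<Rightarrow> complex" where
  "killing A B = 8 * trace (A ** B)"

definition Emat :: "4 \<Rightarrow> 4 \<Rightarrow> mat4" where
  "Emat i j = (\<chi> a b. if a = i \<and> b = j then 1 else 0)"

text \<open>Chevalley basis of sl_4: X_{alpha_i+...+alpha_j} = E_{i-1,j}, X_{-beta} = transpose,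
  H_{alpha_i} = E_{i-1,i-1} - E_{i,i} (indices 0..3).\<close>
definition "H1 = Emat 0 0 - Emat 1 1"
definition "H2 = Emat 1 1 - Emat 2 2"
definition "H3 = Emat 2 2 - Emat 3 3"
definition "Xa1 = Emat 0 1"
definition "Xa2 = Emat 1 2"
definition "Xa3 = Emat 2 3"
definition "Xa12 = Emat 0 2"
definition "Xa23 = Emat 1 3"
definition "Xa123 = Emat 0 3"
definition "Xm1 = Emat 1 0"
definition "Xm2 = Emat 2 1"
definition "Xm3 = Emat 3 2"
definition "Xm12 = Emat 2 0"
definition "Xm23 = Emat 3 1"
definition "Xm123 = Emat 3 0"

definition "e_nil = Xa1 + Xa23"
definition "hplus = smul 2 H1 + smul 2 H2 + smul 2 H3"

definition cent_e :: "mat4 set" where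
  "cent_e = {A \<in> sl4. brk e_nil A = 0}"

definition Xn1 :: "10 \<Rightarrow> mat4" where
  "Xn1 i = [H1, H2, Xa1, Xa2, Xm2, Xm1 + Xa3, Xm3, Xm12, Xm23, Xm123] ! nat (Rep_bit0 i)"

definition n1 :: "mat4 set" where
  "n1 = {A. \<exists>c :: complex^10. A = (\<Sum>i\<in>UNIV. smul (c $ i) (Xn1 i))}"

inductive_set poly_fun :: "(complex^'k \<Rightarrow> complex) set" where
  const: "(\<lambda>q. c) \<in> poly_fun"
| coord: "(\<lambda>q. q $ i) \<in> poly_fun"
| add: "f \<in> poly_fun \<Longrightarrow> g \<in> poly_fun \<Longrightarrow> (\<lambda>q. f q + g q) \<in> poly_fun"
| mult: "f \<in> poly_fun \<Longrightarrow> g \<in> poly_fun \<Longrightarrow> (\<lambda>q. f q * g q) \<in> poly_fun"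

text \<open>Transverse Poisson structure data, given the basis Z of g^e (indexed by 'k),
  the dual elements Zbar, and the basis X of the complement (indexed by 'p).\<close>
definition qpt :: "('k::finite \<Rightarrow> mat4) \<Rightarrow> complex^'k \<Rightarrow> mat4" where
  "qpt Zbar q = (\<Sum>s\<in>UNIV. smul (q $ s) (Zbar s))"

definition C_N :: "('p::finite \<Rightarrow> mat4) \<Rightarrow> ('k::finite \<Rightarrow> mat4) \<Rightarrow> complex^'k \<Rightarrow> complex^'p^'p" where
  "C_N X Zbar q = (\<chi> l m. killing (e_nil + qpt Zbar q) (brk (X l) (X m)))"

definition D_N :: "('p::finite \<Rightarrow> mat4) \<Rightarrow> ('k::finite \<Rightarrow> mat4) \<Rightarrow> ('k \<Rightarrow> mat4) \<Rightarrow> complex^'k \<Rightarrow> complex^'k^'p" where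
  "D_N X Z Zbar q = (\<chi> l j. killing (qpt Zbar q) (brk (X l) (Z j)))"

definition A_N :: "('k::finite \<Rightarrow> mat4) \<Rightarrow> ('k \<Rightarrow> mat4) \<Rightarrow> complex^'k \<Rightarrow> complex^'k^'k" where
  "A_N Z Zbar q = (\<chi> i j. killing (qpt Zbar q) (brk (Z i) (Z j)))"

definition Lambda_N :: "('p::finite \<Rightarrow> mat4) \<Rightarrow> ('k::finite \<Rightarrow> mat4) \<Rightarrow> ('k \<Rightarrow> mat4) \<Rightarrow> complex^'k \<Rightarrow> complex^'k^'k" where
  "Lambda_N X Z Zbar q =
     A_N Z Zbar q + transpose (D_N X Z Zbar q) ** matrix_inv (C_N X Zbar q) ** D_N X Z Zbar q"

end

theory Submission imports Defs begin

(*
  The complement and non-invariance claims are finite linear algebra in the Chevalley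
  basis; in particular h^+ acts on X_{-alpha_1} and X_{alpha_3} with the opposite
  eigenvalues -2 and 2, while n_1 contains these two only through their sum.

  For the Poisson structure, restrict to the line
    y_d = X_{-alpha_1-alpha_2} + X_{-alpha_2-alpha_3} + d (X_{-alpha_3} - X_{alpha_1})
  in sl_4 orthogonal to n_1. Along it C_N is invertible for d <> 1, and if a, b are the
  coordinates of X_{alpha_1+alpha_2} and X_{alpha_1+alpha_2+alpha_3} (both in g^e) in the
  basis Z, then sum_ij a_i Lambda_ij b_j = 16 (2d - 1) / (d - 1). Polynomial entries would
  make this combination continuous in d, but it has a pole at d = 1.
*)

section \<open>Matrix entries and bilinearity\<close>

lemma UNIV_4': "(UNIV :: 4 set) = {0, 1, 2, 3}"
proof -
  have "x \<in> {0, 1, 2, 3}" for x :: 4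
  proof (cases x rule: bit0.cases)
    case (1 z)
    then have "0 \<le> z" "z < 4" by simp_all
    then have "z = 0 \<or> z = 1 \<or> z = 2 \<or> z = 3" by arith
    with 1 show ?thesis by (elim disjE) simp_all
  qed
  then show ?thesis by auto
qed

lemma UNIV_10: "(UNIV :: 10 set) = {0, 1, 2, 3, 4, 5, 6, 7, 8, 9}"
proof -
  have "x \<in> {0, 1, 2, 3, 4, 5, 6, 7, 8, 9}" for x :: 10
  proof (cases x rule: bit0.cases)
    case (1 z)
    then have "0 \<le> z" "z < 10" by simp_all
    then have "z = 0 \<or> z = 1 \<or> z = 2 \<or> z = 3 \<or> z = 4 \<or> z = 5 \<or> z = 6 \<or> z = 7 \<or> z = 8 \<or> z = 9"
      by arith
    with 1 show ?thesis by (elim disjE) simp_all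
  qed
  then show ?thesis by auto
qed

lemma sum_4': "sum f (UNIV :: 4 set) = f 0 + f 1 + f 2 + f 3"
  unfolding UNIV_4' by (subst sum.insert, simp, simp)+ (simp add: add.assoc)

lemma sum_10: "sum f (UNIV :: 10 set) = f 0 + f 1 + f 2 + f 3 + f 4 + f 5 + f 6 + f 7 + f 8 + f 9"
  unfolding UNIV_10 by (subst sum.insert, simp, simp)+ (simp add: add.assoc)

lemma forall_4': "(\<forall>i::4. P i) \<longleftrightarrow> P 0 \<and> P 1 \<and> P 2 \<and> P 3"
  using ball_UNIV[of P] unfolding UNIV_4' by simp

lemma forall_10: "(\<forall>i::10. P i) \<longleftrightarrow> P 0 \<and> P 1 \<and> P 2 \<and> P 3 \<and> P 4 \<and> P 5 \<and> P 6 \<and> P 7 \<and> P 8 \<and> P 9"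
  using ball_UNIV[of P] unfolding UNIV_10 by simp

lemma Emat_nth [simp]: "Emat i j $ a $ b = (if a = i \<and> b = j then 1 else 0)"
  by (simp add: Emat_def)

lemma smul_nth [simp]: "smul c A $ a $ b = c * A $ a $ b"
  by (simp add: smul_def)

lemma matrix_matrix_mult_nth_4:
  "(A ** B) $ i $ j = A$i$0 * B$0$j + A$i$1 * B$1$j + A$i$2 * B$2$j + A$i$3 * B$3$j"
  for A B :: mat4
  by (simp add: matrix_matrix_mult_def sum_4')

lemma killing_eq_sum: "killing A B = 8 * (\<Sum>i\<in>UNIV. \<Sum>k\<in>UNIV. A$i$k * B$k$i)"
  by (simp add: killing_def trace_def matrix_matrix_mult_def)

lemma killing_Emat: "killing A (Emat i j) = 8 * A$j$i"
proof -
  have "(\<Sum>a\<in>UNIV. \<Sum>k\<in>UNIV. A$a$k * Emat i j $k$a) = (\<Sum>a\<in>UNIV. if a = j then A$a$i else 0)"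
    by (intro sum.cong refl) (simp add: if_distrib sum.delta cong: if_cong)
  then show ?thesis by (simp add: killing_eq_sum)
qed

lemma trace_Emat: "trace (Emat i j) = (if i = j then 1 else 0)"
  by (auto simp: trace_def intro: sum.neutral)

lemma smul_matrix_mult_left: "smul c A ** B = smul c (A ** B)"
  by (simp add: vec_eq_iff matrix_matrix_mult_def smul_def sum_distrib_left mult.assoc)

lemma smul_matrix_mult_right: "A ** smul c B = smul c (A ** B)"
  by (simp add: vec_eq_iff matrix_matrix_mult_def smul_def sum_distrib_left mult.left_commute)

lemma smul_diff: "smul c (A - B) = smul c A - smul c B"
  by (simp add: vec_eq_iff right_diff_distrib)

lemma smul_zero [simp]: "smul c 0 = 0" "smul 0 A = 0"
  by (simp_all add: vec_eq_iff)

lemma trace_smul: "trace (smul c A) = c * trace A"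
  by (simp add: trace_def sum_distrib_left)

lemma trace_sum: "trace (\<Sum>s\<in>S. f s) = (\<Sum>s\<in>S. trace (f s))"
  unfolding trace_def by (simp add: sum.swap[of _ S])

lemma matrix_add_rdistrib: "(A + B) ** C = A ** C + B ** C"
  for A B :: "'a::semiring_1^'n^'m" and C :: "'a^'p^'n"
  by (simp add: vec_eq_iff matrix_matrix_mult_def distrib_right sum.distrib)

lemma killing_add_left: "killing (A + B) C = killing A C + killing B C"
  unfolding killing_def matrix_add_rdistrib trace_add by (simp only: distrib_left)

lemma killing_add_right: "killing C (A + B) = killing C A + killing C B"
  unfolding killing_def matrix_add_ldistrib trace_add by (simp only: distrib_left)

lemma matrix_diff_rdistrib: "(A - B) ** C = A ** C - B ** C"
  for A B :: "'a::ring_1^'n^'m" and C :: "'a^'p^'n"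
  by (simp add: vec_eq_iff matrix_matrix_mult_def left_diff_distrib sum_subtractf)

lemma matrix_diff_ldistrib: "C ** (A - B) = C ** A - C ** B"
  for A B :: "'a::ring_1^'p^'n" and C :: "'a^'n^'m"
  by (simp add: vec_eq_iff matrix_matrix_mult_def right_diff_distrib sum_subtractf)

lemma killing_diff_left: "killing (A - B) C = killing A C - killing B C"
  unfolding killing_def matrix_diff_rdistrib trace_sub by (simp only: right_diff_distrib)

lemma killing_diff_right: "killing C (A - B) = killing C A - killing C B"
  unfolding killing_def matrix_diff_ldistrib trace_sub by (simp only: right_diff_distrib)

lemma killing_smul_left: "killing (smul c A) B = c * killing A B"
  unfolding killing_def smul_matrix_mult_left trace_smul by (simp only: mult.left_commute)

lemma killing_smul_right: "killing B (smul c A) = c * killing B A"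
  unfolding killing_def smul_matrix_mult_right trace_smul by (simp only: mult.left_commute)

lemma killing_zero [simp]: "killing 0 B = 0" "killing B 0 = 0"
  by (simp_all add: killing_def trace_def)

lemma killing_sum_left: "killing (\<Sum>s\<in>S. f s) B = (\<Sum>s\<in>S. killing (f s) B)"
  by (induction S rule: infinite_finite_induct) (simp_all add: killing_add_left)

lemma killing_sum_right: "killing B (\<Sum>s\<in>S. f s) = (\<Sum>s\<in>S. killing B (f s))"
  by (induction S rule: infinite_finite_induct) (simp_all add: killing_add_right)

lemma brk_add_left: "brk (A + B) C = brk A C + brk B C"
  unfolding brk_def by (simp add: matrix_add_rdistrib matrix_add_ldistrib)

lemma brk_add_right: "brk C (A + B) = brk C A + brk C B"
  unfolding brk_def by (simp add: matrix_add_rdistrib matrix_add_ldistrib)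

lemma brk_smul_left: "brk (smul c A) B = smul c (brk A B)"
  unfolding brk_def by (simp add: smul_matrix_mult_left smul_matrix_mult_right smul_diff)

lemma brk_smul_right: "brk B (smul c A) = smul c (brk B A)"
  unfolding brk_def by (simp add: smul_matrix_mult_left smul_matrix_mult_right smul_diff)

lemma brk_zero [simp]: "brk 0 B = 0" "brk B 0 = 0"
  unfolding brk_def by simp_all

lemma brk_sum_left: "brk (\<Sum>s\<in>S. f s) B = (\<Sum>s\<in>S. brk (f s) B)"
  by (induction S rule: infinite_finite_induct) (simp_all add: brk_add_left)

lemma brk_sum_right: "brk B (\<Sum>s\<in>S. f s) = (\<Sum>s\<in>S. brk B (f s))"
  by (induction S rule: infinite_finite_induct) (simp_all add: brk_add_right)

lemma killing_nondegenerate_sl4: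
  assumes "w \<in> sl4" and orth: "\<And>A. A \<in> sl4 \<Longrightarrow> killing w A = 0"
  shows "w = 0"
proof -
  have off_diagonal: "w$i$j = 0" if "i \<noteq> j" for i j
    using orth[of "Emat j i"] that by (simp add: sl4_def trace_Emat killing_Emat)
  have diagonal: "w$i$i = w$3$3" for i
    using orth[of "Emat i i - Emat 3 3"]
    by (simp add: sl4_def trace_sub trace_Emat killing_diff_right killing_Emat)
  have "4 * w$3$3 = 0"
    using \<open>w \<in> sl4\<close> diagonal[of 0] diagonal[of 1] diagonal[of 2] by (simp add: sl4_def trace_def sum_4')
  then show ?thesis
    using off_diagonal diagonal by (simp add: vec_eq_iff) (metis)
qed

section \<open>The complement \<open>n\<^sub>1\<close>\<close>

lemma Xn1_simps:
  "Xn1 0 = H1" "Xn1 1 = H2" "Xn1 2 = Xa1" "Xn1 3 = Xa2" "Xn1 4 = Xm2"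
  "Xn1 5 = Xm1 + Xa3" "Xn1 6 = Xm3" "Xn1 7 = Xm12" "Xn1 8 = Xm23" "Xn1 9 = Xm123"
  by (simp_all add: Xn1_def bit0.Rep_numeral bit0.Rep_0 bit0.Rep_1)

lemmas chevalley_defs = H1_def H2_def H3_def Xa1_def Xa2_def Xa3_def Xa12_def Xa23_def Xa123_def
  Xm1_def Xm2_def Xm3_def Xm12_def Xm23_def Xm123_def e_nil_def hplus_def

lemmas entry_simps = brk_def matrix_matrix_mult_nth_4 sum_10 Xn1_simps chevalley_defs

lemma zero_in_n1: "0 \<in> n1"
  unfolding n1_def by (auto intro: exI[of _ 0])

lemma zero_in_cent_e: "0 \<in> cent_e"
  by (simp add: cent_e_def sl4_def brk_def trace_def)

lemma n1_inter_cent_e: "n1 \<inter> cent_e = {0}"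
proof -
  have "A = 0" if "A \<in> n1" and "A \<in> cent_e" for A
  proof -
    obtain c where A: "A = (\<Sum>i\<in>UNIV. smul (c $ i) (Xn1 i))"
      using \<open>A \<in> n1\<close> unfolding n1_def by blast
    have comm: "brk e_nil A $ a $ b = 0" for a b
      using \<open>A \<in> cent_e\<close> unfolding cent_e_def by simp
    have "c$5 = 0" using comm[of 0 0] unfolding A by (simp add: entry_simps)
    moreover have "c$1 = 2 * c$0" using comm[of 0 1] unfolding A by (simp add: entry_simps)
    moreover have "c$3 = 0" using comm[of 0 2] unfolding A by (simp add: entry_simps)
    moreover have "c$2 = 0" using comm[of 0 3] unfolding A by (simp add: entry_simps)
    moreover have "c$9 = 0" using comm[of 1 0] unfolding A by (simp add: entry_simps)
    moreover have "c$8 = c$5" using comm[of 1 1] unfolding A by (simp add: entry_simps)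
    moreover have "c$6 = 0" using comm[of 1 2] unfolding A by (simp add: entry_simps)
    moreover have "c$0 = c$1" using comm[of 1 3] unfolding A by (simp add: entry_simps)
    moreover have "c$7 = 0" using comm[of 2 1] unfolding A by (simp add: entry_simps)
    moreover have "c$4 = 0" using comm[of 2 3] unfolding A by (simp add: entry_simps)
    ultimately show "A = 0" unfolding A by (simp add: entry_simps vec_eq_iff forall_4')
  qed
  then show ?thesis using zero_in_n1 zero_in_cent_e by blast
qed

definition n1_coords :: "mat4 \<Rightarrow> complex^10" where
  "n1_coords A = (\<chi> i. if i = 0 then A$0$0 - A$3$3 else if i = 1 then A$1$1 + A$0$0 - 2 * A$3$3
     else if i = 2 then A$0$1 - A$1$3 else if i = 3 then A$1$2 else if i = 4 then A$2$1
     else if i = 5 then A$1$0 else if i = 6 then A$3$2 else if i = 7 then A$2$0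
     else if i = 8 then A$3$1 else A$3$0)"

lemma sl4_eq_n1_plus_cent_e: "\<forall>A\<in>sl4. \<exists>x\<in>n1. \<exists>z\<in>cent_e. A = x + z"
proof
  fix A assume "A \<in> sl4"
  define x where "x = (\<Sum>i\<in>UNIV. smul (n1_coords A $ i) (Xn1 i))"
  have "x \<in> n1" unfolding n1_def x_def by blast
  have trace_A: "A$0$0 + A$1$1 + A$2$2 + A$3$3 = 0"
    using \<open>A \<in> sl4\<close> unfolding sl4_def trace_def by (simp add: sum_4')
  have "A - x \<in> cent_e"
    unfolding cent_e_def sl4_def
  proof (intro CollectI conjI)
    show "trace (A - x) = 0" unfolding x_def trace_def using trace_A
      by (simp add: entry_simps sum_4' n1_coords_def algebra_simps)
    show "brk e_nil (A - x) = 0" unfolding x_def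
      by (simp add: entry_simps vec_eq_iff forall_4' n1_coords_def algebra_simps)
  qed
  with \<open>x \<in> n1\<close> show "\<exists>x\<in>n1. \<exists>z\<in>cent_e. A = x + z" by force
qed

lemma n1_entry_1_0_eq_entry_2_3: "A \<in> n1 \<Longrightarrow> A$1$0 = A$2$3"
  unfolding n1_def by (auto simp: entry_simps)

lemma n1_not_ad_hplus_invariant: "\<exists>x\<in>n1. brk hplus x \<notin> n1"
proof
  show "Xn1 5 \<in> n1" unfolding n1_def
    by (rule CollectI, rule exI[of _ "\<chi> i. if i = 5 then 1 else 0"]) (simp add: sum_10 vec_eq_iff)
  have "brk hplus (Xn1 5) $ 1 $ 0 \<noteq> brk hplus (Xn1 5) $ 2 $ 3"
    by (simp add: entry_simps)
  then show "brk hplus (Xn1 5) \<notin> n1" using n1_entry_1_0_eq_entry_2_3 by blast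
qed

lemma matrix_inv_left: "invertible A \<Longrightarrow> matrix_inv A ** A = mat 1"
  unfolding invertible_def matrix_inv_def by (metis (mono_tags, lifting) someI_ex)

lemma pairing_vector_matrix_mult:
  fixes D :: "'a::comm_semiring_1^'k^'p"
  shows "(\<Sum>i\<in>UNIV. a$i * (w v* D)$i) = (\<Sum>l\<in>UNIV. (D *v a)$l * w$l)"
proof -
  have "(\<Sum>i\<in>UNIV. a$i * (w v* D)$i) = (\<Sum>i\<in>UNIV. \<Sum>l\<in>UNIV. a$i * (D$l$i * w$l))"
    unfolding vector_matrix_mult_def by (simp add: sum_distrib_left mult_ac)
  also have "\<dots> = (\<Sum>l\<in>UNIV. \<Sum>i\<in>UNIV. a$i * (D$l$i * w$l))" by (rule sum.swap)
  also have "\<dots> = (\<Sum>l\<in>UNIV. (D *v a)$l * w$l)"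
    unfolding matrix_vector_mult_def by (simp add: sum_distrib_left sum_distrib_right mult_ac)
  finally show ?thesis .
qed

lemma pairing_schur_complement:
  fixes A :: "'a::comm_ring_1^'k^'k" and D :: "'a^'k^'p" and C :: "'a^'p^'p"
  assumes "invertible C" and "C *v x = D *v b"
  shows "(\<Sum>i\<in>UNIV. a$i * ((A + transpose D ** matrix_inv C ** D) *v b)$i)
       = (\<Sum>i\<in>UNIV. a$i * (A *v b)$i) + (\<Sum>l\<in>UNIV. (D *v a)$l * x$l)"
proof -
  have "matrix_inv C *v (D *v b) = x"
    using assms by (metis matrix_inv_left matrix_vector_mul_assoc matrix_vector_mul_lid)
  then have "(A + transpose D ** matrix_inv C ** D) *v b = A *v b + x v* D"
    by (simp add: matrix_vector_mult_add_rdistrib matrix_vector_mul_assoc[symmetric])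
  then show ?thesis
    by (simp add: distrib_left sum.distrib pairing_vector_matrix_mult)
qed

lemma C_N_mult_vec:
  "C_N X Zbar q *v x = (\<chi> l. killing (e_nil + qpt Zbar q) (brk (X l) (\<Sum>m\<in>UNIV. smul (x$m) (X m))))"
  unfolding C_N_def
  by (simp add: vec_eq_iff matrix_vector_mult_def killing_sum_right brk_sum_right brk_smul_right
      killing_smul_right mult.commute)

lemma D_N_mult_vec:
  "D_N X Z Zbar q *v c = (\<chi> l. killing (qpt Zbar q) (brk (X l) (\<Sum>j\<in>UNIV. smul (c$j) (Z j))))"
  unfolding D_N_def
  by (simp add: vec_eq_iff matrix_vector_mult_def killing_sum_right brk_sum_right brk_smul_right
      killing_smul_right mult.commute)

lemma A_N_pairing:
  "(\<Sum>i\<in>UNIV. a$i * (A_N Z Zbar q *v b)$i)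
     = killing (qpt Zbar q) (brk (\<Sum>i\<in>UNIV. smul (a$i) (Z i)) (\<Sum>j\<in>UNIV. smul (b$j) (Z j)))"
  unfolding A_N_def brk_sum_left
  by (simp add: matrix_vector_mult_def killing_sum_right brk_sum_right brk_smul_left
      brk_smul_right killing_smul_right sum_distrib_left mult_ac)

section \<open>A line in \<open>sl\<^sub>4\<close> orthogonal to \<open>n\<^sub>1\<close>\<close>

definition perp_line :: "complex \<Rightarrow> mat4" where
  "perp_line d = Xm12 + Xm23 + smul d (Xm3 - Xa1)"

lemma perp_line_sl4: "perp_line d \<in> sl4"
  by (simp add: sl4_def perp_line_def trace_def sum_4' chevalley_defs)

lemma perp_line_orth_n1: "killing (perp_line d) (Xn1 j) = 0"
proof -
  have "\<forall>j. killing (perp_line d) (Xn1 j) = 0"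
    by (simp add: forall_10 killing_eq_sum sum_4' perp_line_def entry_simps)
  then show ?thesis ..
qed

lemma killing_perp_line:
  "killing (perp_line d) B = killing (Xm12 + Xm23) B + d * killing (Xm3 - Xa1) B"
  by (simp add: perp_line_def killing_add_left killing_smul_left)

definition C_line :: "complex \<Rightarrow> complex^10 \<Rightarrow> complex^10" where
  "C_line d x = (\<chi> l. killing (e_nil + perp_line d) (brk (Xn1 l) (\<Sum>m\<in>UNIV. smul (x$m) (Xn1 m))))"

lemma C_line_components:
  "C_line d x $ 0 = 16*(d-1)*x$5 + 8*x$8"
  "C_line d x $ 1 = (8-16*d)*x$5 - 8*x$8"
  "C_line d x $ 2 = 8*x$3 - 8*x$9"
  "C_line d x $ 3 = -8*x$2 + 8*x$5 + (8-8*d)*x$7"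
  "C_line d x $ 4 = -8*x$6"
  "C_line d x $ 5 = (16-16*d)*x$0 + (16*d-8)*x$1 - 8*x$3"
  "C_line d x $ 6 = 8*x$4"
  "C_line d x $ 7 = (8*d-8)*x$3"
  "C_line d x $ 8 = -8*x$0 + 8*x$1"
  "C_line d x $ 9 = 8*x$2"
  by (simp_all add: C_line_def killing_eq_sum sum_4' perp_line_def entry_simps algebra_simps)

lemma C_line_injective:
  assumes "d \<noteq> 1" and "C_line d x = 0"
  shows "x = 0"
proof -
  have eq: "C_line d x $ k = 0" for k using assms(2) by simp
  have d: "d - 1 \<noteq> 0" using assms(1) by simp
  have x2: "x$2 = 0" and x4: "x$4 = 0" and x6: "x$6 = 0"
    using eq[of 9] eq[of 6] eq[of 4] by (simp_all add: C_line_components)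
  have x3: "x$3 = 0" using eq[of 7] d by (simp add: C_line_components)
  have x9: "x$9 = 0" using eq[of 2] x3 by (simp add: C_line_components)
  have "(16*(d-1)*x$5 + 8*x$8) + ((8-16*d)*x$5 - 8*x$8) = 0"
    using eq[of 0] eq[of 1] by (simp add: C_line_components)
  then have x5: "x$5 = 0" by (simp add: algebra_simps)
  have x8: "x$8 = 0" using eq[of 0] x5 by (simp add: C_line_components)
  have x7: "x$7 = 0" using eq[of 3] x2 x5 d by (simp add: C_line_components)
  have x1: "x$1 = x$0" using eq[of 8] by (simp add: C_line_components)
  have "(16-16*d)*x$0 + (16*d-8)*x$0 = 0" using eq[of 5] x1 x3 by (simp add: C_line_components)
  then have x0: "x$0 = 0" by (simp add: algebra_simps)
  show "x = 0" using x0 x1 x2 x3 x4 x5 x6 x7 x8 x9 by (simp add: vec_eq_iff forall_10)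
qed

definition line_sol :: "complex \<Rightarrow> complex^10" where
  "line_sol s = (\<chi> l. if l = 0 \<or> l = 1 then 1 + s else if l = 3 \<or> l = 9 then s
                     else if l = 4 then -1 else 0)"

text \<open>The right-hand side is \<open>D\<^sub>N b\<close> for the coordinates \<open>b\<close> of \<open>X_{\<alpha>1+\<alpha>2+\<alpha>3}\<close>; the pole of the
  solution at \<open>d = 1\<close> is the pole of \<open>\<Lambda>\<^sub>N\<^sub>1\<close>.\<close>
lemma C_line_line_sol:
  assumes "d \<noteq> 1"
  shows "C_line d (line_sol (d / (d - 1))) = (\<chi> l. killing (perp_line d) (brk (Xn1 l) Xa123))"
proof -
  define s where "s = d / (d - 1)"
  have ds: "d * s = s + d" using assms unfolding s_def by (simp add: field_simps)
  have "(\<chi> l. killing (perp_line d) (brk (Xn1 l) Xa123))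
      = (\<chi> k. if k = 5 then 8 else if k = 6 then -8 else if k = 7 then 8 * d else 0)"
    by (simp add: vec_eq_iff forall_10 killing_eq_sum sum_4' perp_line_def entry_simps)
  moreover have "d * (s * 8) = d * 8 + s * 8" using ds by (metis distrib_right mult.assoc add.commute)
  ultimately show ?thesis
    unfolding s_def[symmetric] vec_eq_iff forall_10 C_line_components
    by (simp add: line_sol_def algebra_simps ds)
qed

lemma killing_perp_line_brk_Xa12:
  "(\<chi> l. killing (perp_line d) (brk (Xn1 l) Xa12)) = (\<chi> k. if k = 0 \<or> k = 1 then 8 else 0)"
  by (simp add: vec_eq_iff forall_10 killing_eq_sum sum_4' perp_line_def entry_simps)

lemma brk_Xa12_Xa123: "brk Xa12 Xa123 = 0"
  by (simp add: vec_eq_iff forall_4' entry_simps)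

lemma Xa12_Xa123_cent_e: "Xa12 \<in> cent_e" "Xa123 \<in> cent_e"
  by (simp_all add: cent_e_def sl4_def trace_def sum_4' vec_eq_iff forall_4' entry_simps)

section \<open>Non-polynomiality of \<open>\<Lambda>\<^sub>N\<^sub>1\<close>\<close>

lemma poly_fun_continuous_on: "P \<in> poly_fun \<Longrightarrow> continuous_on UNIV P"
  by (induction rule: poly_fun.induct) (auto intro!: continuous_intros)

lemma isCont_times_diff_vanishes:
  fixes f G :: "'a::real_normed_field \<Rightarrow> 'a"
  assumes "isCont G a" and "isCont f a" and "\<And>d. d \<noteq> a \<Longrightarrow> (d - a) * G d = f d"
  shows "f a = 0"
proof -
  have "((\<lambda>d. (d - a) * G d) \<longlongrightarrow> (a - a) * G a) (at a)"
    using assms(1) by (intro tendsto_intros) (simp add: isCont_def)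
  then have to_zero: "((\<lambda>d. (d - a) * G d) \<longlongrightarrow> 0) (at a)" by simp
  have "(f \<longlongrightarrow> f a) (at a)" using assms(2) by (simp add: isCont_def)
  moreover have "\<forall>\<^sub>F d in at a. f d = (d - a) * G d"
    by (auto simp: eventually_at_filter assms(3))
  ultimately have "((\<lambda>d. (d - a) * G d) \<longlongrightarrow> f a) (at a)"
    by (rule Lim_transform_eventually)
  from tendsto_unique[OF _ this to_zero] show ?thesis by simp
qed

locale transverse_basis =
  fixes Z Zbar :: "'k::finite \<Rightarrow> mat4"
  assumes Z_span_cent_e: "\<And>A. A \<in> cent_e \<Longrightarrow> \<exists>c. A = (\<Sum>i\<in>UNIV. smul (c $ i) (Z i))"
    and Zbar_sl4: "\<And>s. Zbar s \<in> sl4"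
    and Zbar_dual: "\<And>s i. killing (Zbar s) (Z i) = (if s = i then 1 else 0)"
    and Zbar_orth_n1: "\<And>s j. killing (Zbar s) (Xn1 j) = 0"
begin

lemma orth_basis_imp_zero:
  assumes "w \<in> sl4" and "\<And>i. killing w (Z i) = 0" and "\<And>j. killing w (Xn1 j) = 0"
  shows "w = 0"
proof (rule killing_nondegenerate_sl4[OF assms(1)])
  fix A assume "A \<in> sl4"
  then obtain x z where "x \<in> n1" "z \<in> cent_e" and A: "A = x + z"
    using sl4_eq_n1_plus_cent_e by blast
  obtain c where x: "x = (\<Sum>j\<in>UNIV. smul (c $ j) (Xn1 j))" using \<open>x \<in> n1\<close> unfolding n1_def by blast
  obtain c' where z: "z = (\<Sum>i\<in>UNIV. smul (c' $ i) (Z i))" using Z_span_cent_e \<open>z \<in> cent_e\<close> by blast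
  show "killing w A = 0"
    unfolding A x z by (simp add: killing_add_right killing_sum_right killing_smul_right assms(2,3))
qed

lemma qpt_dual_coords:
  assumes "y \<in> sl4" and "\<And>j. killing y (Xn1 j) = 0"
  shows "qpt Zbar (\<chi> s. killing y (Z s)) = y"
proof -
  let ?w = "y - qpt Zbar (\<chi> s. killing y (Z s))"
  have "?w \<in> sl4"
    using assms(1) Zbar_sl4 unfolding sl4_def qpt_def by (simp add: trace_sub trace_sum trace_smul)
  moreover have "killing ?w (Z i) = 0" for i
    by (simp add: qpt_def killing_diff_left killing_sum_left killing_smul_left Zbar_dual if_distrib
        cong: if_cong)
  moreover have "killing ?w (Xn1 j) = 0" for j
    by (simp add: qpt_def killing_diff_left killing_sum_left killing_smul_left Zbar_orth_n1 assms(2))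
  ultimately have "?w = 0" by (rule orth_basis_imp_zero)
  then show ?thesis by simp
qed

definition line_coords :: "complex \<Rightarrow> complex^'k" where
  "line_coords d = (\<chi> s. killing (perp_line d) (Z s))"

lemma qpt_line_coords: "qpt Zbar (line_coords d) = perp_line d"
  unfolding line_coords_def by (rule qpt_dual_coords[OF perp_line_sl4 perp_line_orth_n1])

lemma continuous_on_line_coords: "continuous_on UNIV line_coords"
  unfolding line_coords_def killing_perp_line by (intro continuous_intros)

lemma invertible_C_N_line:
  assumes "d \<noteq> 1"
  shows "invertible (C_N Xn1 Zbar (line_coords d))"
proof -
  have "C_N Xn1 Zbar (line_coords d) *v x = C_line d x" for x
    unfolding C_N_mult_vec qpt_line_coords C_line_def ..
  then show ?thesis
    unfolding invertible_left_inverse matrix_left_invertible_ker using C_line_injective[OF assms] by auto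
qed

lemma Lambda_N_line_pairing:
  assumes "d \<noteq> 1"
    and a: "Xa12 = (\<Sum>i\<in>UNIV. smul (a $ i) (Z i))"
    and b: "Xa123 = (\<Sum>i\<in>UNIV. smul (b $ i) (Z i))"
  shows "(\<Sum>i\<in>UNIV. a$i * (Lambda_N Xn1 Z Zbar (line_coords d) *v b)$i) = 16 * (2 * d - 1) / (d - 1)"
proof -
  let ?q = "line_coords d"
  have C_sol: "C_N Xn1 Zbar ?q *v line_sol (d / (d - 1)) = D_N Xn1 Z Zbar ?q *v b"
    unfolding C_N_mult_vec D_N_mult_vec qpt_line_coords C_line_def[symmetric] b[symmetric]
    by (rule C_line_line_sol[OF assms(1)])
  have "(\<Sum>i\<in>UNIV. a$i * (Lambda_N Xn1 Z Zbar ?q *v b)$i)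
      = (\<Sum>i\<in>UNIV. a$i * (A_N Z Zbar ?q *v b)$i)
        + (\<Sum>l\<in>UNIV. (D_N Xn1 Z Zbar ?q *v a)$l * line_sol (d / (d - 1)) $ l)"
    unfolding Lambda_N_def by (rule pairing_schur_complement[OF invertible_C_N_line[OF assms(1)] C_sol])
  also have "\<dots> = 16 * (1 + d / (d - 1))"
    unfolding A_N_pairing D_N_mult_vec qpt_line_coords a[symmetric] b[symmetric] brk_Xa12_Xa123
      killing_perp_line_brk_Xa12
    by (simp add: sum_10 line_sol_def)
  also have "\<dots> = 16 * (2 * d - 1) / (d - 1)"
    using assms(1) by (simp add: field_simps)
  finally show ?thesis .
qed

theorem Lambda_N_not_polynomial:
  "\<exists>i j. \<not> (\<exists>P\<in>poly_fun. \<forall>q. invertible (C_N Xn1 Zbar q) \<longrightarrow> Lambda_N Xn1 Z Zbar q $ i $ j = P q)"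
proof (rule ccontr)
  assume "\<not> ?thesis"
  then obtain P where P_poly: "\<And>i j. P i j \<in> poly_fun"
    and P_eq: "\<And>i j q. invertible (C_N Xn1 Zbar q) \<Longrightarrow> Lambda_N Xn1 Z Zbar q $ i $ j = P i j q"
    by metis
  obtain a where a: "Xa12 = (\<Sum>i\<in>UNIV. smul (a $ i) (Z i))"
    using Z_span_cent_e Xa12_Xa123_cent_e(1) by blast
  obtain b where b: "Xa123 = (\<Sum>i\<in>UNIV. smul (b $ i) (Z i))"
    using Z_span_cent_e Xa12_Xa123_cent_e(2) by blast
  define G where "G d = (\<Sum>i\<in>UNIV. a$i * (\<Sum>j\<in>UNIV. P i j (line_coords d) * b$j))" for d
  have "continuous_on UNIV G"
    unfolding G_def
    by (intro continuous_intros continuous_on_compose2[OF poly_fun_continuous_on[OF P_poly]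
          continuous_on_line_coords]) auto
  then have G_cont: "isCont G 1" by (simp add: continuous_on_eq_continuous_at)
  have G_pole: "(d - 1) * G d = 16 * (2 * d - 1)" if "d \<noteq> 1" for d
  proof -
    have "G d = (\<Sum>i\<in>UNIV. a$i * (Lambda_N Xn1 Z Zbar (line_coords d) *v b)$i)"
      unfolding G_def matrix_vector_mult_def by (simp add: P_eq[OF invertible_C_N_line[OF that]])
    with that show ?thesis by (simp add: Lambda_N_line_pairing[OF that a b])
  qed
  have "isCont (\<lambda>d. 16 * (2 * d - 1 :: complex)) 1" by (intro continuous_intros)
  from isCont_times_diff_vanishes[OF G_cont this G_pole] show False by simp
qed

end

theorem mainTheorem7:
  shows "n1 \<inter> cent_e = {0}
    \<and> (\<forall>A\<in>sl4. \<exists>x\<in>n1. \<exists>z\<in>cent_e. A = x + z)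
    \<and> (\<exists>x\<in>n1. brk hplus x \<notin> n1)
    \<and> (\<forall>(Z :: 5 \<Rightarrow> mat4) (Zbar :: 5 \<Rightarrow> mat4).
         (\<forall>i. Z i \<in> cent_e)
         \<and> (\<forall>c :: complex^5. (\<Sum>i\<in>UNIV. smul (c $ i) (Z i)) = 0 \<longrightarrow> c = 0)
         \<and> (\<forall>A\<in>cent_e. \<exists>c :: complex^5. A = (\<Sum>i\<in>UNIV. smul (c $ i) (Z i)))
         \<and> (\<forall>s. Zbar s \<in> sl4)
         \<and> (\<forall>s i. killing (Zbar s) (Z i) = (if s = i then 1 else 0))
         \<and> (\<forall>s j. killing (Zbar s) (Xn1 j) = 0)
       \<longrightarrow> (\<exists>i j. \<not> (\<exists>P \<in> poly_fun.
               \<forall>q. invertible (C_N Xn1 Zbar q) \<longrightarrow> Lambda_N Xn1 Z Zbar q $ i $ j = P q)))"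
proof -
  have "transverse_basis Z Zbar"
    if "\<forall>A\<in>cent_e. \<exists>c. A = (\<Sum>i\<in>UNIV. smul (c $ i) (Z i))" and "\<forall>s. Zbar s \<in> sl4"
      and "\<forall>s i. killing (Zbar s) (Z i) = (if s = i then 1 else 0)"
      and "\<forall>s j. killing (Zbar s) (Xn1 j) = 0"
    for Z Zbar :: "5 \<Rightarrow> mat4"
    using that by unfold_locales auto
  then show ?thesis
    using n1_inter_cent_e sl4_eq_n1_plus_cent_e n1_not_ad_hplus_invariant
      transverse_basis.Lambda_N_not_polynomial
    by blast
qed

end
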